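(* Work in Scenario 1. For a profile of reported types $\mathbf t=(t_1,\dots,t_n)\in T$ (all bidders participating) and $i,j\in N$ with $j\ne i$, define $$W_j(\mathbf t)=v_j-\sum_{k\in N\setminus\{j\}}\eta_{k\leftarrow j},\qquad W_j^{-i}(\mathbf t)=v_j-\sum_{k\in N\setminus\{i,j\}}\eta_{k\leftarrow j},$$ where $\eta_{k\leftarrow j}$ is the value reported by bidder $k$. Consider the mechanism $x_j(\mathbf t)=\mathbf 1\{W_j(\mathbf t)\ge 0\}$ for all $j$; $$p_i(\mathbf t)=\sum_{j\in N\setminus\{i\}}\Big[W_j^{-i}(\mathbf t)\big(\mathbf 1\{W_j^{-i}(\mathbf t)\ge0\}-\mathbf 1\{W_j(\mathbf t)\ge0\}\big)+\eta_{j\leftarrow i}\,\mathbf 1\{W_i(\mathbf t)\ge0\}\Big];$$ and, when bidder $i$ does not participate, $x_i(\emptyset,\mathbf t_{-i})=p_i(\emptyset,\mathbf t_{-i})=0$ and $x_j(\emptyset,\mathbf t_{-i})=\mathbf 1\{W_j^{-i}(\mathbf t)\ge0\}$ for $j\neq i$. Then: (a) for every $\mathbf t\in T$, $\mathbf x(\mathbf t)$ maximizes the social welfare $\mathrm{SW}(\mathbf z;\mathbf t)=\sum_{i\in N}\nu_i(\mathbf z)$ over $\mathbf z\in[0,1]^n$; (b) the mechanism is DSIC; (c) it is ex-post IR; (d) $p_i(\mathbf t)\ge0$ for all $i\in N$ and $\mathbf t\in T$.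
   Context: Model: there are $n$ bidders $N=\{1,\dots,n\}$ and a seller of a freely replicable good; an allocation is any $\mathbf x=(x_1,\dots,x_n)\in[0,1]^n$ (no constraint coupling coordinates). Bidder $i$ has a value $v_i\in[\underline v_i,\bar v_i]\subset\mathbb R_{\ge0}$ and, for each $j\ne i$, an externality parameter $\eta_{i\leftarrow j}\in[\underline\eta_{i\leftarrow j},\bar\eta_{i\leftarrow j}]\subset\mathbb R_{\ge0}$; her valuation is $\nu_i(\mathbf x)=v_ix_i-\sum_{j\ne i}\eta_{i\leftarrow j}x_j$ and her utility with payment $p_i$ is $u_i(\mathbf x,p_i;\mathbf t)=\nu_i(\mathbf x)-p_i$ (evaluated at the true parameters). In Scenario 1, bidder $i$'s private type is $t_i=(v_i,(\eta_{i\leftarrow j})_{j\ne i})\in T_i=[\underline v_i,\bar v_i]\times\prod_{j\ne i}[\underline\eta_{i\leftarrow j},\bar\eta_{i\leftarrow j}]$; $T=\prod_iT_i$. Bids lie in $B_i=T_i\cup\{\emptyset\}$ ($\emptyset$ = non-participation). A mechanism is an allocation function $\mathbf x:B\to[0,1]^n$ and payment function $\mathbf p:B\to\mathbb R^n_{\ge0}$ with $x_i=p_i=0$ whenever bidder $i$ bids $\emptyset$; it is specified on bid profiles with at most one $\emptyset$. DSIC: for all $\mathbf t,\hat{\mathbf t}\in T$ and $i$, $u_i(\mathbf x(t_i,\hat{\mathbf t}_{-i}),p_i(t_i,\hat{\mathbf t}_{-i});\mathbf t)\ge u_i(\mathbf x(\hat{\mathbf t}),p_i(\hat{\mathbf t});\mathbf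 t)$. Ex-post IR: for all $\mathbf t\in T$ and $i$, $u_i(\mathbf x(\mathbf t),p_i(\mathbf t);\mathbf t)\ge u_i(\mathbf x(\emptyset,\mathbf t_{-i}),p_i(\emptyset,\mathbf t_{-i});\mathbf t)$. *)

theory Defs
  imports Main "HOL-Library.Product_Plus" Complex_Main
begin

text \<open>Bidders are 0, ..., n-1. A (reported or true) type profile is given by
  v :: nat => real (v i = value of bidder i) and
  e :: nat => nat => real (e i j = externality parameter eta_{i <- j}, reported by bidder i).
  Bidder i's type is (v i, e i).\<close>

definition ind :: "bool \<Rightarrow> real" where
  "ind b = (if b then 1 else 0)"

definition in_T :: "nat \<Rightarrow> (nat \<Rightarrow> real) \<Rightarrow> (nat \<Rightarrow> real) \<Rightarrow> (nat \<Rightarrow> nat \<Rightarrow> real) \<Rightarrow> (nat \<Rightarrow> nat \<Rightarrow> real)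
    \<Rightarrow> (nat \<Rightarrow> real) \<Rightarrow> (nat \<Rightarrow> nat \<Rightarrow> real) \<Rightarrow> bool" where
  "in_T n vlo vhi elo ehi v e \<longleftrightarrow>
     (\<forall>i<n. vlo i \<le> v i \<and> v i \<le> vhi i \<and>
        (\<forall>j<n. j \<noteq> i \<longrightarrow> elo i j \<le> e i j \<and> e i j \<le> ehi i j))"

definition valuation :: "nat \<Rightarrow> (nat \<Rightarrow> real) \<Rightarrow> (nat \<Rightarrow> nat \<Rightarrow> real) \<Rightarrow> nat \<Rightarrow> (nat \<Rightarrow> real) \<Rightarrow> real" where
  "valuation n v e i x = v i * x i - (\<Sum>j\<in>{0..<n} - {i}. e i j * x j)"

definition utility :: "nat \<Rightarrow> (nat \<Rightarrow> real) \<Rightarrow> (nat \<Rightarrow> nat \<Rightarrow> real) \<Rightarrow> nat \<Rightarrow> (nat \<Rightarrow> real) \<Rightarrow> real \<Rightarrow> real" where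
  "utility n v e i x p = valuation n v e i x - p"

definition social_welfare :: "nat \<Rightarrow> (nat \<Rightarrow> real) \<Rightarrow> (nat \<Rightarrow> nat \<Rightarrow> real) \<Rightarrow> (nat \<Rightarrow> real) \<Rightarrow> real" where
  "social_welfare n v e z = (\<Sum>i\<in>{0..<n}. valuation n v e i z)"

definition W :: "nat \<Rightarrow> (nat \<Rightarrow> real) \<Rightarrow> (nat \<Rightarrow> nat \<Rightarrow> real) \<Rightarrow> nat \<Rightarrow> real" where
  "W n v e j = v j - (\<Sum>k\<in>{0..<n} - {j}. e k j)"

definition Wm :: "nat \<Rightarrow> (nat \<Rightarrow> real) \<Rightarrow> (nat \<Rightarrow> nat \<Rightarrow> real) \<Rightarrow> nat \<Rightarrow> nat \<Rightarrow> real" where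
  "Wm n v e i j = v j - (\<Sum>k\<in>{0..<n} - {i, j}. e k j)"

definition alloc :: "nat \<Rightarrow> (nat \<Rightarrow> real) \<Rightarrow> (nat \<Rightarrow> nat \<Rightarrow> real) \<Rightarrow> nat \<Rightarrow> real" where
  "alloc n v e j = ind (W n v e j \<ge> 0)"

definition pay :: "nat \<Rightarrow> (nat \<Rightarrow> real) \<Rightarrow> (nat \<Rightarrow> nat \<Rightarrow> real) \<Rightarrow> nat \<Rightarrow> real" where
  "pay n v e i = (\<Sum>j\<in>{0..<n} - {i}.
      Wm n v e i j * (ind (Wm n v e i j \<ge> 0) - ind (W n v e j \<ge> 0))
      + e j i * ind (W n v e i \<ge> 0))"

text \<open>The mechanism when bidder i bids the empty bid (others as in the profile v, e;
  bidder i's own entries are not used).\<close>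
definition alloc_out :: "nat \<Rightarrow> (nat \<Rightarrow> real) \<Rightarrow> (nat \<Rightarrow> nat \<Rightarrow> real) \<Rightarrow> nat \<Rightarrow> nat \<Rightarrow> real" where
  "alloc_out n v e i j = (if j = i then 0 else ind (Wm n v e i j \<ge> 0))"

definition pay_out :: "nat \<Rightarrow> (nat \<Rightarrow> real) \<Rightarrow> (nat \<Rightarrow> nat \<Rightarrow> real) \<Rightarrow> nat \<Rightarrow> real" where
  "pay_out n v e i = 0"

end

theory Submission
  imports Defs
begin

text \<open>The mechanism is a VCG mechanism with Clarke pivot. Exchanging the order of summation,
  the social welfare of an allocation is \<open>\<Sum>j. x j * W j\<close>, so allocating exactly the
  bidders with \<open>W j \<ge> 0\<close> is efficient. The payment of bidder \<open>i\<close> equals the pivot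
  \<open>\<Sum>j\<noteq>i. max (W\<^sup>-\<^sup>i j) 0\<close>, which does not depend on \<open>i\<close>'s report, minus the welfare that the
  others derive from the chosen allocation. Hence \<open>i\<close>'s utility is the true social welfare of
  the allocation minus the pivot, and is maximised by the efficient allocation for the true
  type (DSIC); non-participation yields the allocation \<open>[W\<^sup>-\<^sup>i j \<ge> 0]\<close>, whose welfare is no
  larger (IR). Each payment term is nonnegative because \<open>W j = W\<^sup>-\<^sup>i j - \<eta>\<^sub>i\<^sub>\<leftarrow>\<^sub>j \<le> W\<^sup>-\<^sup>i j\<close>.\<close>

lemma sum_offdiag_swap:
  fixes f :: "'a \<Rightarrow> 'a \<Rightarrow> 'b::comm_monoid_add"
  assumes "finite A"
  shows "(\<Sum>i\<in>A. \<Sum>j\<in>A - {i}. f i j) = (\<Sum>j\<in>A. \<Sum>i\<in>A - {j}. f i j)"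
proof -
  have offdiag: "(\<Sum>j\<in>A - {i}. g j) = (\<Sum>j\<in>A. if j = i then 0 else g j)" for i and g :: "'a \<Rightarrow> 'b"
    using assms by (intro sum.mono_neutral_cong_left) auto
  have "(\<Sum>i\<in>A. \<Sum>j\<in>A. if j = i then 0 else f i j) = (\<Sum>j\<in>A. \<Sum>i\<in>A. if i = j then 0 else f i j)"
    by (subst sum.swap) (simp add: eq_commute)
  then show ?thesis
    by (simp only: offdiag)
qed

lemma social_welfare_eq_sum_W: "social_welfare n v e z = (\<Sum>j\<in>{0..<n}. z j * W n v e j)"
proof -
  have "(\<Sum>i\<in>{0..<n}. \<Sum>j\<in>{0..<n} - {i}. e i j * z j)
      = (\<Sum>j\<in>{0..<n}. z j * (\<Sum>i\<in>{0..<n} - {j}. e i j))"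
    by (subst sum_offdiag_swap) (simp_all add: sum_distrib_left mult.commute)
  then show ?thesis
    unfolding social_welfare_def valuation_def W_def
    by (simp add: sum_subtractf right_diff_distrib mult.commute)
qed

lemma mult_le_ind_nonneg_mult:
  assumes "0 \<le> z" "z \<le> 1"
  shows "z * w \<le> ind (w \<ge> 0) * w"
  using assms mult_right_mono[of z 1 w] mult_nonneg_nonpos[of z w] by (auto simp: ind_def)

lemma alloc_maximizes_social_welfare:
  assumes "\<forall>j<n. 0 \<le> z j \<and> z j \<le> 1"
  shows "social_welfare n v e z \<le> social_welfare n v e (alloc n v e)"
  unfolding social_welfare_eq_sum_W alloc_def
  using assms by (intro sum_mono mult_le_ind_nonneg_mult) auto
lemma W_eq_Wm_minus:
  assumes "i < n" "j < n" "j \<noteq> i"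
  shows "W n v e j = Wm n v e i j - e i j"
proof -
  have split: "{0..<n} - {j} = insert i ({0..<n} - {i, j})"
    using assms by auto
  have "(\<Sum>k\<in>{0..<n} - {j}. e k j) = e i j + (\<Sum>k\<in>{0..<n} - {i, j}. e k j)"
    unfolding split by simp
  then show ?thesis
    unfolding W_def Wm_def by simp
qed

lemma valuation_eq_welfare_minus_others:
  assumes "i < n"
  shows "valuation n v e i x = social_welfare n v e x - (\<Sum>j\<in>{0..<n} - {i}. x j * Wm n v e i j)
           + x i * (\<Sum>k\<in>{0..<n} - {i}. e k i)"
proof -
  have "social_welfare n v e x = x i * W n v e i + (\<Sum>j\<in>{0..<n} - {i}. x j * W n v e j)"
    unfolding social_welfare_eq_sum_W using assms by (simp add: sum.remove)
  also have "(\<Sum>j\<in>{0..<n} - {i}. x j * W n v e j)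
      = (\<Sum>j\<in>{0..<n} - {i}. x j * Wm n v e i j) - (\<Sum>j\<in>{0..<n} - {i}. e i j * x j)"
    using assms by (simp add: W_eq_Wm_minus right_diff_distrib mult.commute flip: sum_subtractf)
  finally show ?thesis
    unfolding valuation_def W_def by (simp add: right_diff_distrib mult.commute)
qed

definition clarke_pivot :: "nat \<Rightarrow> (nat \<Rightarrow> real) \<Rightarrow> (nat \<Rightarrow> nat \<Rightarrow> real) \<Rightarrow> nat \<Rightarrow> real" where
  "clarke_pivot n v e i = (\<Sum>j\<in>{0..<n} - {i}. Wm n v e i j * ind (Wm n v e i j \<ge> 0))"

lemma pay_eq_pivot_minus_others:
  "pay n v e i = clarke_pivot n v e i - (\<Sum>j\<in>{0..<n} - {i}. alloc n v e j * Wm n v e i j)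
     + alloc n v e i * (\<Sum>k\<in>{0..<n} - {i}. e k i)"
  unfolding pay_def clarke_pivot_def alloc_def
  by (simp add: sum.distrib sum_subtractf sum_distrib_left right_diff_distrib mult.commute)

lemma Wm_fun_upd_self: "j \<noteq> i \<Longrightarrow> Wm n (v(i := a)) (e(i := b)) i j = Wm n v e i j"
  unfolding Wm_def by (intro arg_cong2[where f = "(-)"] sum.cong) auto

lemma clarke_pivot_fun_upd_self: "clarke_pivot n (v(i := a)) (e(i := b)) i = clarke_pivot n v e i"
  unfolding clarke_pivot_def by (intro sum.cong refl) (simp add: Wm_fun_upd_self)

text \<open>Bidder \<open>i\<close> with true type \<open>(v i, e i)\<close> reporting \<open>(v' i, e' i)\<close> against reports
  \<open>v', e'\<close> of the others: only \<open>i\<close>'s own row enters her valuation, so it is evaluated in the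
  profile where \<open>i\<close>'s report is replaced by her true type.\<close>
lemma utility_eq_welfare_minus_pivot:
  assumes "i < n"
  shows "utility n v e i (alloc n v' e') (pay n v' e' i)
    = social_welfare n (v'(i := v i)) (e'(i := e i)) (alloc n v' e') - clarke_pivot n v' e' i"
proof -
  let ?v = "v'(i := v i)" and ?e = "e'(i := e i)" and ?x = "alloc n v' e'"
  have "valuation n v e i ?x = valuation n ?v ?e i ?x"
    unfolding valuation_def by simp
  also have "\<dots> = social_welfare n ?v ?e ?x - (\<Sum>j\<in>{0..<n} - {i}. ?x j * Wm n v' e' i j)
      + ?x i * (\<Sum>k\<in>{0..<n} - {i}. e' k i)"
    unfolding valuation_eq_welfare_minus_others[OF assms] by (simp add: Wm_fun_upd_self)
  finally show ?thesis
    unfolding utility_def pay_eq_pivot_minus_others by simp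
qed

lemma utility_out_eq_welfare_minus_pivot:
  assumes "i < n"
  shows "utility n v e i (alloc_out n v e i) (pay_out n v e i)
    = social_welfare n v e (alloc_out n v e i) - clarke_pivot n v e i"
proof -
  have "(\<Sum>j\<in>{0..<n} - {i}. alloc_out n v e i j * Wm n v e i j) = clarke_pivot n v e i"
    unfolding clarke_pivot_def alloc_out_def by (intro sum.cong refl) (simp add: mult.commute)
  then show ?thesis
    unfolding utility_def pay_out_def valuation_eq_welfare_minus_others[OF assms]
    by (simp add: alloc_out_def)
qed

lemma mult_ind_diff_nonneg:
  fixes w a :: real
  assumes "0 \<le> a"
  shows "0 \<le> w * (ind (w \<ge> 0) - ind (w - a \<ge> 0))"
  using assms by (auto simp: ind_def)

theorem mainTheorem3:
  fixes n :: nat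
    and vlo vhi :: "nat \<Rightarrow> real" and elo ehi :: "nat \<Rightarrow> nat \<Rightarrow> real"
  assumes vlo_nonneg: "\<forall>i<n. 0 \<le> vlo i \<and> vlo i \<le> vhi i"
      and elo_nonneg: "\<forall>i<n. \<forall>j<n. j \<noteq> i \<longrightarrow> 0 \<le> elo i j \<and> elo i j \<le> ehi i j"
  shows
    \<comment> \<open>(a) efficiency\<close>
    "(\<forall>v e. in_T n vlo vhi elo ehi v e \<longrightarrow>
        (\<forall>z. (\<forall>j<n. 0 \<le> z j \<and> z j \<le> 1) \<longrightarrow>
           social_welfare n v e z \<le> social_welfare n v e (alloc n v e)))
     \<comment> \<open>(b) DSIC\<close>
     \<and> (\<forall>v e v' e'. in_T n vlo vhi elo ehi v e \<longrightarrow> in_T n vlo vhi elo ehi v' e' \<longrightarrow>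
        (\<forall>i<n. utility n v e i (alloc n (v'(i := v i)) (e'(i := e i)))
                   (pay n (v'(i := v i)) (e'(i := e i)) i)
              \<ge> utility n v e i (alloc n v' e') (pay n v' e' i)))
     \<comment> \<open>(c) ex-post IR\<close>
     \<and> (\<forall>v e. in_T n vlo vhi elo ehi v e \<longrightarrow>
        (\<forall>i<n. utility n v e i (alloc n v e) (pay n v e i)
              \<ge> utility n v e i (alloc_out n v e i) (pay_out n v e i)))
     \<comment> \<open>(d) nonnegative payments\<close>
     \<and> (\<forall>v e. in_T n vlo vhi elo ehi v e \<longrightarrow> (\<forall>i<n. pay n v e i \<ge> 0))"
proof (intro conjI allI impI)
  fix v e and z :: "nat \<Rightarrow> real"
  assume "\<forall>j<n. 0 \<le> z j \<and> z j \<le> 1"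
  then show "social_welfare n v e z \<le> social_welfare n v e (alloc n v e)"
    by (rule alloc_maximizes_social_welfare)
next
  fix v v' :: "nat \<Rightarrow> real" and e e' :: "nat \<Rightarrow> nat \<Rightarrow> real" and i
  assume "i < n"
  have "0 \<le> alloc n v' e' j \<and> alloc n v' e' j \<le> 1" for j
    by (simp add: alloc_def ind_def)
  then show "utility n v e i (alloc n v' e') (pay n v' e' i)
      \<le> utility n v e i (alloc n (v'(i := v i)) (e'(i := e i))) (pay n (v'(i := v i)) (e'(i := e i)) i)"
    using \<open>i < n\<close> by (simp add: utility_eq_welfare_minus_pivot clarke_pivot_fun_upd_self
        alloc_maximizes_social_welfare)
next
  fix v e i
  assume "i < n"
  have "social_welfare n v e (alloc_out n v e i) \<le> social_welfare n v e (alloc n v e)"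
    by (rule alloc_maximizes_social_welfare) (simp add: alloc_out_def ind_def)
  then show "utility n v e i (alloc_out n v e i) (pay_out n v e i) \<le> utility n v e i (alloc n v e) (pay n v e i)"
    using utility_eq_welfare_minus_pivot[OF \<open>i < n\<close>, of v e v e]
    by (simp add: utility_out_eq_welfare_minus_pivot[OF \<open>i < n\<close>])
next
  fix v e i
  assume T: "in_T n vlo vhi elo ehi v e" and "i < n"
  have e_nonneg: "0 \<le> e k j" if "k < n" "j < n" "j \<noteq> k" for k j
    using T elo_nonneg that unfolding in_T_def by (meson order_trans)
  show "0 \<le> pay n v e i"
    unfolding pay_def
    using \<open>i < n\<close> by (intro sum_nonneg add_nonneg_nonneg)
      (auto simp: W_eq_Wm_minus e_nonneg mult_ind_diff_nonneg ind_def)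
qed

end
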